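(* Let $q=p^r$ with $p$ prime, $\theta(a)=a^{p^s}$ with $1\le s\le r-1$. Let $g(t)\in\mathbb{F}_q[t;\theta]$ have degree $k$ and be a right divisor of some monic polynomial of degree $n$ in $\mathbb{F}_q[t;\theta]$, and let $\mathscr{C}\subseteq\mathbb{F}_q^n$ be the skew $\theta$-module code generated by $g$, i.e. $\mathscr{C}=\{w\in\mathbb{F}_q[t;\theta]:\deg w<n,\ w=a(t)g(t)\text{ for some }a\}$. Let $\omega$ be a generator of $\mathbb{F}_{q^{[k]_s}}^*$. Suppose $$k\ge\log_{p^s}\Big[1+\Big(\frac{p^s-1}{r}\Big)\log_p\Big(\frac{(p^s)^n+p^s-2}{p^s-1}\Big)\Big],$$ and suppose there exist an integer $l\ge0$, an integer $c$ with $\gcd(c,q^{[k]_s}-1)=1$, and an integer $\Delta\ge2$ such that $g^{[]_s}(\omega^{l+ci})=0$ for $i=0,\dots,\Delta-2$. Then $d(\mathscr{C})\ge\Delta$.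
   Context: $\mathbb{F}_q[t;\theta]$ is the skew polynomial ring with $ta=\theta(a)t$; polynomials of degree $<n$ are identified with coefficient vectors in $\mathbb{F}_q^n$ and $d(\mathscr{C})$ is the minimum Hamming distance. For $i\ge0$, $[i]_s=\frac{(p^s)^i-1}{p^s-1}$. For $g(t)=\sum_ia_it^i$, $g^{[]_s}(x)=\sum_ia_ix^{[i]_s}\in\mathbb{F}_q[x]$ (commutative polynomial ring), evaluated at elements of the extension field $\mathbb{F}_{q^{[k]_s}}$. *)

theory Defs
  imports "HOL-Computational_Algebra.Polynomial" "HOL-Library.Extended_Nat" Complex_Main
begin

definition frob :: "nat \<Rightarrow> nat \<Rightarrow> 'a::field \<Rightarrow> 'a" where
  "frob p s a = a ^ (p ^ s)"

text \<open>Multiplication in the skew polynomial ring F[t;theta], with t a = theta(a) t,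
  polynomials represented by their coefficient sequences:
  (sum_i a_i t^i)(sum_j b_j t^j) = sum_{i,j} a_i theta^i(b_j) t^(i+j).\<close>
definition skew_mult :: "('a::field \<Rightarrow> 'a) \<Rightarrow> 'a poly \<Rightarrow> 'a poly \<Rightarrow> 'a poly" where
  "skew_mult \<theta> f g = (\<Sum>i\<le>degree f. monom (coeff f i) i * map_poly (\<theta> ^^ i) g)"

definition qbr :: "nat \<Rightarrow> nat \<Rightarrow> nat \<Rightarrow> nat" where
  "qbr p s i = ((p ^ s) ^ i - 1) div (p ^ s - 1)"

text \<open>The linearized (commutative) polynomial g^{[]_s}, with coefficients mapped into
  an extension field via the embedding phi, evaluated at x.\<close>
definition lin_eval :: "('a::field \<Rightarrow> 'b::field) \<Rightarrow> nat \<Rightarrow> nat \<Rightarrow> 'a poly \<Rightarrow> 'b \<Rightarrow> 'b" where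
  "lin_eval \<phi> p s g x = (\<Sum>i\<le>degree g. \<phi> (coeff g i) * x ^ qbr p s i)"

definition skew_code :: "('a::field \<Rightarrow> 'a) \<Rightarrow> nat \<Rightarrow> 'a poly \<Rightarrow> 'a poly set" where
  "skew_code \<theta> n g = {w. degree w < n \<and> (\<exists>a. w = skew_mult \<theta> a g)}"

definition hamming_dist :: "nat \<Rightarrow> 'a::zero poly \<Rightarrow> 'a poly \<Rightarrow> nat" where
  "hamming_dist n u v = card {i. i < n \<and> coeff u i \<noteq> coeff v i}"

text \<open>Minimum Hamming distance (infinity if fewer than two codewords).\<close>
definition min_dist :: "nat \<Rightarrow> 'a::zero poly set \<Rightarrow> enat" where
  "min_dist n C = (INF uv \<in> {(u, v). u \<in> C \<and> v \<in> C \<and> u \<noteq> v}. enat (hamming_dist n (fst uv) (snd uv)))"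

end

theory Submission
  imports Defs "HOL-Number_Theory.Residues"
begin

text \<open>Linearization preserves roots under left multiplication in \<open>F\<^sub>q[t;\<theta>]\<close>: by the
  freshman's dream, \<open>(a g)^[](\<beta>) = \<Sum>\<^sub>i \<phi>(a\<^sub>i) \<beta>^[i] (g^[](\<beta>))^(p^(s i))\<close>. So the difference \<open>w\<close> of
  two codewords vanishes at \<open>\<omega>^(l + c j)\<close> for \<open>j \<le> \<Delta> - 2\<close>, and since
  \<open>(\<omega>^(l + c j))^[i] = (\<omega>^l)^[i] ((\<omega>^c)^[i])^j\<close>, these are \<open>\<Delta> - 1\<close> Vandermonde-type equations in
  the nodes \<open>(\<omega>^c)^[i]\<close>, \<open>i\<close> ranging over the support of \<open>w\<close>. The degree hypothesis amounts to
  \<open>[n] < q^[k]\<close>, the size of the extension field, which together with the coprimality of \<open>c\<close>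
  makes the nodes distinct. Hence the support of \<open>w\<close> has at least \<open>\<Delta>\<close> elements.\<close>

hide_const (open) UnivPoly.coeff UnivPoly.monom

lemma qbr_eq_sum:
  assumes "2 \<le> p ^ s"
  shows "qbr p s i = (\<Sum>m<i. (p ^ s) ^ m)"
proof -
  have "int ((p ^ s) ^ i - 1) = int (p ^ s - 1) * int (\<Sum>m<i. (p ^ s) ^ m)"
    using assms by (simp add: of_nat_diff power_diff_1_eq)
  then have "(p ^ s) ^ i - 1 = (p ^ s - 1) * (\<Sum>m<i. (p ^ s) ^ m)"
    by (simp only: of_nat_mult [symmetric] of_nat_eq_iff)
  then show ?thesis
    using assms by (simp add: qbr_def)
qed

lemma qbr_add:
  assumes "2 \<le> p ^ s"
  shows "qbr p s (i + j) = qbr p s i + (p ^ s) ^ i * qbr p s j"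
  by (induction j) (simp_all add: qbr_eq_sum [OF assms] algebra_simps power_add)

lemma strict_mono_qbr:
  assumes "2 \<le> p ^ s"
  shows "strict_mono (qbr p s)"
proof -
  have "0 < p"
    using assms by (cases "p = 0") (auto simp: power_0_left split: if_splits)
  then show ?thesis
    unfolding strict_mono_Suc_iff using assms by (simp add: qbr_eq_sum)
qed

lemma qbr_real:
  assumes "2 \<le> p ^ s"
  shows "real (qbr p s i) * (real p ^ s - 1) + 1 = (real p ^ s) ^ i"
proof -
  have "2 \<le> real p ^ s"
    using assms by (simp flip: of_nat_power)
  then show ?thesis
    using assms by (simp add: qbr_eq_sum geometric_sum)
qed

text \<open>The hypothesis on the degree \<open>k\<close> of the generator unwinds to \<open>[n] < q^[k]\<close>, because
  \<open>((p^s)^n + p^s - 2) / (p^s - 1) = [n] + 1\<close> and \<open>(p^s)^k = 1 + (p^s - 1) [k]\<close>.\<close>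
lemma qbr_less_field_size:
  fixes p r s n k :: nat
  assumes "prime p" "1 \<le> s" "1 \<le> r"
    and degree_bound: "real k \<ge> log (real p ^ s) (1 + ((real p ^ s - 1) / real r) *
                log (real p) (((real p ^ s) ^ n + real p ^ s - 2) / (real p ^ s - 1)))"
  shows "qbr p s n < (p ^ r) ^ qbr p s k"
proof -
  have p2: "2 \<le> p"
    using assms(1) by (rule prime_ge_2_nat)
  then have ps2: "2 \<le> p ^ s"
    using power_increasing [of 1 s p] assms(2) by simp
  define P where "P = real p ^ s"
  define L where "L = log (real p) (real (qbr p s n) + 1)"
  have P2: "2 \<le> P"
    unfolding P_def using ps2 by (simp flip: of_nat_power)
  have "((P ^ n + P - 2) / (P - 1)) = real (qbr p s n) + 1"
    using qbr_real [OF ps2, of n] P2 unfolding P_def by (simp add: field_simps)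
  then have "log P (1 + (P - 1) / real r * L) \<le> real k"
    using degree_bound unfolding P_def L_def by simp
  moreover have "0 < 1 + (P - 1) / real r * L"
    unfolding L_def using p2 P2 by (simp add: add_pos_nonneg)
  ultimately have "1 + (P - 1) / real r * L \<le> P ^ k"
    using P2 by (simp add: log_le_iff powr_realpow)
  also have "P ^ k = real (qbr p s k) * (P - 1) + 1"
    using qbr_real [OF ps2] unfolding P_def by simp
  finally have "(P - 1) * L \<le> (P - 1) * real (r * qbr p s k)"
    using P2 assms(3) by (simp add: field_simps)
  then have "L \<le> real (r * qbr p s k)"
    using P2 by simp
  then have "real (qbr p s n) + 1 \<le> real p powr real (r * qbr p s k)"
    unfolding L_def using p2 by (simp add: log_le_iff)
  also have "\<dots> = real p ^ (r * qbr p s k)"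
    by (rule powr_realpow) (use p2 in simp)
  finally have "real (qbr p s n) + 1 \<le> real p ^ (r * qbr p s k)" .
  then have "qbr p s n + 1 \<le> p ^ (r * qbr p s k)"
    by (metis of_nat_1 of_nat_add of_nat_le_iff of_nat_power)
  then show ?thesis
    by (simp add: power_mult)
qed

lemma funpow_frob: "(frob p s ^^ i) x = x ^ p ^ (s * i)"
proof (induction i)
  case (Suc i)
  then show ?case
    by (simp add: frob_def power_mult [symmetric] power_add [symmetric] add.commute)
qed simp

lemma CHAR_eq_prime_of_card:
  assumes "prime p" "card (UNIV :: 'a::{field,finite} set) = p ^ N"
  shows "CHAR('a) = p"
proof -
  have "prime CHAR('a)"
    by (rule prime_CHAR_semidom) (simp add: finite_imp_CHAR_pos)
  moreover have "CHAR('a) dvd p ^ N"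
    using CHAR_dvd_CARD [where 'a = 'a] assms(2) by simp
  ultimately show ?thesis
    using assms(1) by (meson prime_dvd_power primes_dvd_imp_eq)
qed

lemma nonzero_power_card_minus_one:
  fixes x :: "'a::{field,finite}"
  assumes "x \<noteq> 0"
  shows "x ^ (card (UNIV :: 'a set) - 1) = 1"
proof -
  have "(\<Prod>y\<in>UNIV - {0}. x * y) = (\<Prod>y\<in>UNIV - {0}. y)"
    by (rule prod.reindex_bij_witness [of _ "\<lambda>y. y / x" "\<lambda>y. x * y"]) (use assms in auto)
  then have "x ^ card (UNIV - {0 :: 'a}) * (\<Prod>y\<in>UNIV - {0}. y) = 1 * (\<Prod>y\<in>UNIV - {0}. y)"
    by (simp add: prod.distrib)
  then show ?thesis
    by (simp add: card_Diff_singleton)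
qed

lemma generator_powi_eq_one_imp_dvd:
  fixes \<omega> :: "'a::{field,finite}"
  assumes "\<omega> \<noteq> 0" and generator: "\<forall>x. x \<noteq> 0 \<longrightarrow> (\<exists>j::nat. x = \<omega> ^ j)"
    and "\<omega> powi z = 1"
  shows "int (card (UNIV :: 'a set) - 1) dvd z"
proof -
  define N where "N = card (UNIV :: 'a set) - 1"
  have "card {0, 1 :: 'a} \<le> card (UNIV :: 'a set)"
    by (rule card_mono) auto
  then have "0 < N"
    unfolding N_def by simp
  have periodic: "\<omega> ^ j = \<omega> ^ (j mod N)" for j
    using nonzero_power_card_minus_one [OF assms(1)] div_mult_mod_eq [of j N]
    by (metis N_def power_add power_mult power_one mult.commute mult_1)
  have "(\<lambda>j. \<omega> ^ j) ` {..<N} = UNIV - {0}"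
  proof
    show "(\<lambda>j. \<omega> ^ j) ` {..<N} \<subseteq> UNIV - {0}"
      using assms(1) by auto
    show "UNIV - {0} \<subseteq> (\<lambda>j. \<omega> ^ j) ` {..<N}"
    proof
      fix x :: 'a assume "x \<in> UNIV - {0}"
      then obtain j where "x = \<omega> ^ (j mod N)"
        using generator periodic by auto
      then show "x \<in> (\<lambda>j. \<omega> ^ j) ` {..<N}"
        using \<open>0 < N\<close> by simp
    qed
  qed
  then have "inj_on (\<lambda>j. \<omega> ^ j) {..<N}"
    by (intro eq_card_imp_inj_on) (simp_all add: card_Diff_singleton N_def)
  moreover have "\<omega> ^ nat (z mod int N) = \<omega> ^ 0"
  proof -
    have "\<omega> powi z = \<omega> powi (int N * (z div int N)) * \<omega> powi (z mod int N)"
      using assms(1) by (simp flip: power_int_add)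
    also have "\<omega> powi (int N * (z div int N)) = 1"
      using nonzero_power_card_minus_one [OF assms(1)]
      by (simp add: power_int_mult N_def)
    also have "\<omega> powi (z mod int N) = \<omega> ^ nat (z mod int N)"
      using \<open>0 < N\<close> by (simp add: power_int_nonneg_exp)
    finally show ?thesis
      using assms(3) by simp
  qed
  ultimately have "nat (z mod int N) = 0"
    by (rule inj_onD) (use \<open>0 < N\<close> in \<open>simp_all add: nat_less_iff\<close>)
  then have "z mod int N = 0"
    using \<open>0 < N\<close> pos_mod_sign [of "int N" z] by linarith
  then show ?thesis
    unfolding N_def by (simp add: dvd_eq_mod_eq_0)
qed

lemma inj_on_generator_powers_qbr:
  fixes \<omega> :: "'a::{field,finite}" and c :: int
  assumes "\<omega> \<noteq> 0" "\<forall>x. x \<noteq> 0 \<longrightarrow> (\<exists>j::nat. x = \<omega> ^ j)"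
    and "2 \<le> p ^ s" and "qbr p s n \<le> card (UNIV :: 'a set) - 1"
    and "coprime c (int (card (UNIV :: 'a set) - 1))"
  shows "inj_on (\<lambda>i. (\<omega> powi c) ^ qbr p s i) {..<n}"
proof (rule linorder_inj_onI')
  fix i j assume "i \<in> {..<n}" "j \<in> {..<n}" "i < j"
  then have "qbr p s i < qbr p s j" "qbr p s j < qbr p s n"
    using strict_mono_qbr [OF assms(3)] by (auto dest: strict_monoD)
  show "(\<omega> powi c) ^ qbr p s i \<noteq> (\<omega> powi c) ^ qbr p s j"
  proof
    assume "(\<omega> powi c) ^ qbr p s i = (\<omega> powi c) ^ qbr p s j"
    then have "\<omega> powi (c * (int (qbr p s j) - int (qbr p s i))) = 1"
      using assms(1) by (simp add: power_int_power' right_diff_distrib power_int_diff)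
    then have "int (card (UNIV :: 'a set) - 1) dvd c * (int (qbr p s j) - int (qbr p s i))"
      by (rule generator_powi_eq_one_imp_dvd [OF assms(1,2)])
    then have "int (card (UNIV :: 'a set) - 1) dvd int (qbr p s j) - int (qbr p s i)"
      using assms(5) by (simp add: coprime_commute coprime_dvd_mult_right_iff)
    then have "int (card (UNIV :: 'a set) - 1) \<le> int (qbr p s j) - int (qbr p s i)"
      using \<open>qbr p s i < qbr p s j\<close> by (intro zdvd_imp_le) simp_all
    then show False
      using \<open>qbr p s j < qbr p s n\<close> assms(4) by linarith
  qed
qed

lemma vandermonde_weight_eq_0:
  fixes x y :: "'i \<Rightarrow> 'a::field"
  assumes "finite S" "inj_on x S" "k \<in> S"
    and power_sums: "\<And>j. j < card S \<Longrightarrow> (\<Sum>i\<in>S. y i * x i ^ j) = 0"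
  shows "y k = 0"
proof -
  define P where "P = (\<Prod>i\<in>S - {k}. [:- x i, 1:])"
  have poly_P: "poly P z = (\<Prod>i\<in>S - {k}. z - x i)" for z
    unfolding P_def poly_prod by simp
  have "degree P \<le> card (S - {k})"
    unfolding P_def using degree_prod_sum_le [of "S - {k}" "\<lambda>i. [:- x i, 1:]"] assms(1) by simp
  also have "\<dots> < card S"
    using assms(1,3) by (rule card_Diff1_less)
  finally have deg_P: "degree P < card S" .
  have "(\<Sum>i\<in>S. y i * poly P (x i)) = (\<Sum>j\<le>degree P. coeff P j * (\<Sum>i\<in>S. y i * x i ^ j))"
    by (simp add: poly_altdef sum_distrib_left mult_ac sum.swap [of _ S])
  also have "\<dots> = 0"
    using deg_P by (simp add: power_sums)
  finally have "(\<Sum>i\<in>S. y i * poly P (x i)) = 0" .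
  moreover have "poly P (x i) = 0" if "i \<in> S - {k}" for i
    unfolding poly_P using assms(1) that by (intro prod_zero) auto
  ultimately have "y k * poly P (x k) = 0"
    using assms(1,3) by (simp add: sum.remove)
  moreover have "poly P (x k) \<noteq> 0"
    unfolding poly_P using assms(1-3) by (auto simp: inj_on_eq_iff)
  ultimately show ?thesis
    by simp
qed

lemma powi_affine_power:
  fixes \<omega> :: "'a::field"
  assumes "\<omega> \<noteq> 0"
  shows "(\<omega> powi (a + c * int j)) ^ m = (\<omega> powi a) ^ m * ((\<omega> powi c) ^ m) ^ j"
proof -
  have "(\<omega> powi (a + c * int j)) ^ m = \<omega> powi (a * int m + (c * int m) * int j)"
    by (simp add: power_int_power' algebra_simps)
  also have "\<dots> = (\<omega> powi a) ^ m * ((\<omega> powi c) ^ m) ^ j"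
    using assms by (simp add: power_int_add power_int_power')
  finally show ?thesis .
qed

locale field_hom =
  fixes \<phi> :: "'a::field \<Rightarrow> 'b::field"
  assumes hom_add: "\<phi> (x + y) = \<phi> x + \<phi> y"
    and hom_mult: "\<phi> (x * y) = \<phi> x * \<phi> y"
    and hom_one: "\<phi> 1 = 1"
begin

lemma hom_zero: "\<phi> 0 = 0"
proof -
  have "\<phi> 0 + \<phi> 0 = \<phi> 0 + 0"
    using hom_add [of 0 0] by simp
  then show ?thesis
    by (rule add_left_imp_eq)
qed

lemma hom_power: "\<phi> (x ^ n) = \<phi> x ^ n"
  by (induction n) (simp_all add: hom_one hom_mult)

lemma hom_nonzero: "x \<noteq> 0 \<Longrightarrow> \<phi> x \<noteq> 0"
  using hom_mult [of x "inverse x"] hom_one by auto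

lemma lin_eval_eq_sum_lessThan:
  assumes "degree f < M"
  shows "lin_eval \<phi> p s f x = (\<Sum>i<M. \<phi> (coeff f i) * x ^ qbr p s i)"
  unfolding lin_eval_def
  by (rule sum.mono_neutral_left) (use assms in \<open>auto simp: coeff_eq_0 hom_zero\<close>)

lemma lin_eval_0: "lin_eval \<phi> p s 0 x = 0"
  by (simp add: lin_eval_def hom_zero)

lemma lin_eval_add: "lin_eval \<phi> p s (f + h) x = lin_eval \<phi> p s f x + lin_eval \<phi> p s h x"
proof -
  define M where "M = Suc (max (degree f) (degree h))"
  have "degree (f + h) < M" "degree f < M" "degree h < M"
    using degree_add_le_max [of f h] unfolding M_def by linarith+
  then show ?thesis
    by (simp add: lin_eval_eq_sum_lessThan hom_add sum.distrib distrib_right)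
qed

lemma lin_eval_diff: "lin_eval \<phi> p s (f - h) x = lin_eval \<phi> p s f x - lin_eval \<phi> p s h x"
  using lin_eval_add [where f = "f - h" and h = h] by simp

lemma lin_eval_sum: "lin_eval \<phi> p s (\<Sum>i\<in>A. F i) x = (\<Sum>i\<in>A. lin_eval \<phi> p s (F i) x)"
  by (induction A rule: infinite_finite_induct)
    (simp_all add: lin_eval_0 lin_eval_add)

lemma lin_eval_monom: "lin_eval \<phi> p s (monom a m) x = \<phi> a * x ^ qbr p s m"
proof -
  have "lin_eval \<phi> p s (monom a m) x = (\<Sum>i<Suc m. \<phi> (coeff (monom a m) i) * x ^ qbr p s i)"
    by (rule lin_eval_eq_sum_lessThan) (simp add: degree_monom_le le_imp_less_Suc)
  also have "\<dots> = (\<Sum>i<Suc m. if i = m then \<phi> a * x ^ qbr p s m else 0)"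
    by (rule sum.cong) (auto simp: coeff_monom hom_zero)
  finally show ?thesis
    by simp
qed

text \<open>Applying \<open>\<theta>^i\<close> to the coefficients of \<open>g\<close> raises the linearized value to the power
  \<open>p^(s i)\<close> (freshman's dream), and multiplying by \<open>t^i\<close> shifts \<open>[j]\<close> to \<open>[i + j] = [i] + p^(s i) [j]\<close>.\<close>
lemma lin_eval_monom_mult_twist:
  assumes "prime CHAR('b)" "p = CHAR('b)" "2 \<le> p ^ s"
  shows "lin_eval \<phi> p s (monom c i * map_poly (frob p s ^^ i) g) \<beta>
       = \<phi> c * \<beta> ^ qbr p s i * lin_eval \<phi> p s g \<beta> ^ p ^ (s * i)"
proof -
  define e where "e = p ^ (s * i)"
  have "(frob p s ^^ i) 0 = 0"
    using assms(1,2) prime_gt_0_nat [of p] by (simp add: funpow_frob)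
  then have coeff_twist: "coeff (map_poly (frob p s ^^ i) g) j = coeff g j ^ e" for j
    by (simp add: coeff_map_poly funpow_frob e_def)
  have expand: "monom c i * map_poly (frob p s ^^ i) g
      = (\<Sum>j\<le>degree g. monom (c * coeff g j ^ e) (i + j))"
    using poly_as_sum_of_monoms' [OF map_poly_degree_leq, of "frob p s ^^ i" g]
    by (metis (no_types, lifting) coeff_twist mult_monom sum.cong sum_distrib_left)
  have "lin_eval \<phi> p s (monom c i * map_poly (frob p s ^^ i) g) \<beta>
      = (\<Sum>j\<le>degree g. \<phi> c * \<beta> ^ qbr p s i * (\<phi> (coeff g j) * \<beta> ^ qbr p s j) ^ e)"
    unfolding expand lin_eval_sum lin_eval_monom
  proof (intro sum.cong refl)
    fix j
    have "qbr p s (i + j) = qbr p s i + qbr p s j * e"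
      unfolding qbr_add [OF assms(3)] e_def by (simp add: power_mult)
    then show "\<phi> (c * coeff g j ^ e) * \<beta> ^ qbr p s (i + j)
        = \<phi> c * \<beta> ^ qbr p s i * (\<phi> (coeff g j) * \<beta> ^ qbr p s j) ^ e"
      by (simp add: hom_mult hom_power power_add power_mult power_mult_distrib)
  qed
  also have "\<dots> = \<phi> c * \<beta> ^ qbr p s i * lin_eval \<phi> p s g \<beta> ^ e"
    unfolding lin_eval_def sum_distrib_left [symmetric]
    by (rule arg_cong [where f = "(*) _"], rule freshmans_dream_sum' [symmetric, where n = "s * i"])
      (use assms in \<open>simp_all add: e_def\<close>)
  finally show ?thesis
    unfolding e_def .
qed

lemma lin_eval_skew_mult:
  assumes "prime CHAR('b)" "p = CHAR('b)" "2 \<le> p ^ s"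
  shows "lin_eval \<phi> p s (skew_mult (frob p s) a g) \<beta>
       = (\<Sum>i\<le>degree a. \<phi> (coeff a i) * \<beta> ^ qbr p s i * lin_eval \<phi> p s g \<beta> ^ p ^ (s * i))"
  unfolding skew_mult_def lin_eval_sum lin_eval_monom_mult_twist [OF assms] ..

lemma skew_code_lin_eval_eq_0:
  assumes "prime CHAR('b)" "p = CHAR('b)" "2 \<le> p ^ s"
    and "u \<in> skew_code (frob p s) n g" "lin_eval \<phi> p s g \<beta> = 0"
  shows "lin_eval \<phi> p s u \<beta> = 0"
proof -
  have "0 < p"
    using assms(1,2) prime_gt_0_nat by blast
  with assms show ?thesis
    by (auto simp: skew_code_def lin_eval_skew_mult power_0_left)
qed

lemma card_support_ge:
  fixes \<omega> :: 'b and c :: int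
  assumes "w \<noteq> 0" "degree w < n" "\<omega> \<noteq> 0"
    and distinct_nodes: "inj_on (\<lambda>i. (\<omega> powi c) ^ qbr p s i) {..<n}"
    and roots: "\<And>j. j + 2 \<le> \<Delta> \<Longrightarrow> lin_eval \<phi> p s w (\<omega> powi (int l + c * int j)) = 0"
  shows "\<Delta> \<le> card {i. i < n \<and> coeff w i \<noteq> 0}"
proof (rule ccontr)
  define S where "S = {i. i < n \<and> coeff w i \<noteq> 0}"
  assume "\<not> \<Delta> \<le> card {i. i < n \<and> coeff w i \<noteq> 0}"
  then have "card S < \<Delta>"
    unfolding S_def by simp
  define x where "x i = (\<omega> powi c) ^ qbr p s i" for i
  define y where "y i = \<phi> (coeff w i) * (\<omega> powi int l) ^ qbr p s i" for i
  have "finite S"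
    unfolding S_def by simp
  moreover have "inj_on x S"
    using distinct_nodes unfolding x_def S_def by (rule inj_on_subset) auto
  moreover have "degree w \<in> S"
    unfolding S_def using assms(1,2) by simp
  moreover have "(\<Sum>i\<in>S. y i * x i ^ j) = 0" if "j < card S" for j
  proof -
    have "(\<Sum>i\<in>S. y i * x i ^ j) = (\<Sum>i\<in>S. \<phi> (coeff w i) * (\<omega> powi (int l + c * int j)) ^ qbr p s i)"
      by (intro sum.cong) (simp_all add: x_def y_def powi_affine_power [OF assms(3)] mult.assoc)
    also have "\<dots> = (\<Sum>i<n. \<phi> (coeff w i) * (\<omega> powi (int l + c * int j)) ^ qbr p s i)"
      by (rule sum.mono_neutral_left) (auto simp: S_def hom_zero)
    also have "\<dots> = 0"
      using lin_eval_eq_sum_lessThan [OF assms(2)] roots [of j] that \<open>card S < \<Delta>\<close> by simp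
    finally show ?thesis .
  qed
  ultimately have "y (degree w) = 0"
    by (rule vandermonde_weight_eq_0)
  then show False
    using assms(1,3) hom_nonzero [of "lead_coeff w"] by (simp add: y_def power_int_not_zero)
qed

lemma min_dist_skew_code_ge:
  fixes \<omega> :: 'b and c :: int
  assumes "prime CHAR('b)" "p = CHAR('b)" "2 \<le> p ^ s" "\<omega> \<noteq> 0"
    and distinct_nodes: "inj_on (\<lambda>i. (\<omega> powi c) ^ qbr p s i) {..<n}"
    and roots: "\<And>j. j + 2 \<le> \<Delta> \<Longrightarrow> lin_eval \<phi> p s g (\<omega> powi (int l + c * int j)) = 0"
  shows "enat \<Delta> \<le> min_dist n (skew_code (frob p s) n g)"
proof -
  have "\<Delta> \<le> hamming_dist n u v"
    if u: "u \<in> skew_code (frob p s) n g" and v: "v \<in> skew_code (frob p s) n g" and "u \<noteq> v" for u v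
  proof -
    have "degree (u - v) < n"
      using u v degree_diff_le_max [of u v] by (auto simp: skew_code_def)
    moreover have "lin_eval \<phi> p s (u - v) (\<omega> powi (int l + c * int j)) = 0" if "j + 2 \<le> \<Delta>" for j
      using skew_code_lin_eval_eq_0 [OF assms(1-3) _ roots [OF that]] u v by (simp add: lin_eval_diff)
    ultimately have "\<Delta> \<le> card {i. i < n \<and> coeff (u - v) i \<noteq> 0}"
      using \<open>u \<noteq> v\<close> assms(4) distinct_nodes by (intro card_support_ge) auto
    then show ?thesis
      by (simp add: hamming_dist_def)
  qed
  then show ?thesis
    unfolding min_dist_def by (auto intro!: INF_greatest)
qed

end

theorem mainTheorem11:
  fixes p r s n l :: nat and c :: int and \<Delta> :: nat
    and g :: "'a::{field,finite} poly"
    and \<phi> :: "'a \<Rightarrow> 'b::{field,finite}" and \<omega> :: 'b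
  assumes "prime p" and "card (UNIV :: 'a set) = p ^ r"
    and "1 \<le> s" and "s \<le> r - 1"
    and "\<exists>h f. f = skew_mult (frob p s) h g \<and> lead_coeff f = 1 \<and> degree f = n"
    and "card (UNIV :: 'b set) = (p ^ r) ^ qbr p s (degree g)"
    and "\<And>x y. \<phi> (x + y) = \<phi> x + \<phi> y" and "\<And>x y. \<phi> (x * y) = \<phi> x * \<phi> y"
    and "\<phi> 1 = 1"
    and "\<omega> \<noteq> 0" and "\<forall>x::'b. x \<noteq> 0 \<longrightarrow> (\<exists>j::nat. x = \<omega> ^ j)"
    and "real (degree g) \<ge> log (real p ^ s)
           (1 + ((real p ^ s - 1) / real r) *
                log (real p) (((real p ^ s) ^ n + real p ^ s - 2) / (real p ^ s - 1)))"
    and "gcd c (int ((p ^ r) ^ qbr p s (degree g)) - 1) = 1"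
    and "\<Delta> \<ge> 2"
    and "\<forall>i. i \<le> \<Delta> - 2 \<longrightarrow> lin_eval \<phi> p s g (\<omega> powi (int l + c * int i)) = 0"
  shows "enat \<Delta> \<le> min_dist n (skew_code (frob p s) n g)"
proof -
  interpret field_hom \<phi>
    by unfold_locales (fact assms(7-9))+
  have "1 \<le> r" "2 \<le> p ^ s"
    using assms(1,3,4) power_increasing [of 1 s p] prime_ge_2_nat [of p] by auto
  have size_bound: "qbr p s n < card (UNIV :: 'b set)"
    using qbr_less_field_size [OF assms(1,3) \<open>1 \<le> r\<close> assms(12)] assms(6) by simp
  have "CHAR('b) = p"
    using assms(1,6) by (intro CHAR_eq_prime_of_card [where N = "r * qbr p s (degree g)"])
      (simp_all add: power_mult)
  have "coprime c (int (card (UNIV :: 'b set) - 1))"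
    using assms(6,13) size_bound by (simp add: of_nat_diff gcd_eq_1_imp_coprime)
  then have "inj_on (\<lambda>i. (\<omega> powi c) ^ qbr p s i) {..<n}"
    using size_bound by (intro inj_on_generator_powers_qbr [OF assms(10,11) \<open>2 \<le> p ^ s\<close>]) auto
  then show ?thesis
    using assms(1,10,15) \<open>CHAR('b) = p\<close> \<open>2 \<le> p ^ s\<close>
    by (intro min_dist_skew_code_ge [where l = l]) auto
qed

end
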